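(* For every integer $t\ge 1$, with $v=4t+1$, the $(v,2,1)$-BIBD on a $v$-set $X$ (whose blocks are all $2$-subsets of $X$) has a strong nesting $\phi:\mathcal{A}\to Y$ with $X\subseteq Y$ and $|Y|=w=6t+2$, and this is optimal: no strong nesting of this BIBD has $|Y|<6t+2$.
   Context: A $(v,k,\lambda)$-BIBD is a pair $(X,\mathcal{A})$ where $X$ is a set of $v$ points and $\mathcal{A}$ is a multiset of $k$-subsets of $X$ (blocks) such that every pair of distinct points lies in exactly $\lambda$ blocks. Given a $(v,k,\lambda)$-BIBD $(X,\mathcal{A})$ and a set $Y\supseteq X$ with $|Y|=w$, a map $\phi:\mathcal{A}\to Y$ is a strong nesting if (1) $\phi(A)\notin A$ for every block $A\in\mathcal{A}$, and (2) the multiset of pairs $\{\{x,\phi(A)\}: A\in\mathcal{A},\ x\in A\}$ (one pair for each block $A$, counted with multiplicity in $\mathcal{A}$, and each $x\in A$) consists of distinct pairs. A strong nesting is optimal if $w=|Y|$ is as small as possible. *)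

theory Defs
  imports Main
begin

text \<open>A design whose (multi)set of blocks is given as a family B indexed by a finite
  index set I (so repeated blocks correspond to distinct indices).\<close>

definition is_bibd :: "'a set \<Rightarrow> 'i set \<Rightarrow> ('i \<Rightarrow> 'a set) \<Rightarrow> nat \<Rightarrow> nat \<Rightarrow> nat \<Rightarrow> bool" where
  "is_bibd X I B v k lam \<longleftrightarrow> finite X \<and> card X = v \<and> finite I \<and>
     (\<forall>i\<in>I. B i \<subseteq> X \<and> card (B i) = k) \<and>
     (\<forall>x\<in>X. \<forall>y\<in>X. x \<noteq> y \<longrightarrow> card {i\<in>I. x \<in> B i \<and> y \<in> B i} = lam)"

definition strong_nesting :: "'a set \<Rightarrow> 'i set \<Rightarrow> ('i \<Rightarrow> 'a set) \<Rightarrow> 'a set \<Rightarrow> ('i \<Rightarrow> 'a) \<Rightarrow> bool" where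
  "strong_nesting X I B Y phi \<longleftrightarrow> finite Y \<and> X \<subseteq> Y \<and>
     (\<forall>i\<in>I. phi i \<in> Y \<and> phi i \<notin> B i) \<and>
     inj_on (\<lambda>(i, x). {x, phi i}) (SIGMA i:I. B i)"

text \<open>The complete (v,2,1) design on X: blocks are all 2-subsets, indexed by themselves.\<close>

definition pair_blocks :: "'a set \<Rightarrow> 'a set set" where
  "pair_blocks X = {A. A \<subseteq> X \<and> card A = 2}"

end

theory Submission
  imports Defs
begin

text \<open>
  Lower bound: a block nested by a point of X yields two pairs \<open>{x, phi A}\<close> which are again
  blocks, and all these pairs are distinct, so at most half of the \<open>(4t+1)2t\<close> blocks are
  nested inside X. A point outside X nests pairwise disjoint blocks, hence at most \<open>2t\<close> of
  them. So at least \<open>(4t+1)t\<close> blocks need outside points, i.e. \<open>|Y - X| \<ge> 2t + 1\<close>.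

  Construction: take \<open>X = \<int>\<^sub>4\<^sub>t \<union> {\<infinity>}\<close>. The point \<open>c \<in> \<int>\<^sub>4\<^sub>t\<close> nests \<open>{c - t, \<infinity>}\<close> and the
  blocks \<open>{c - k, c - (2t - k)}\<close> for \<open>0 < k < t\<close>; thus the inner points nest all chords of even
  length \<open>< 2t\<close> and all pairs through \<open>\<infinity>\<close>, and \<open>c\<close> nests exactly the points \<open>c - m\<close>,
  \<open>0 < m < 2t\<close>, once each. Two inner points can therefore not nest each other, as the offsets
  would add up to a nonzero multiple of \<open>4t\<close> below \<open>4t\<close>. The \<open>2t\<close> diameters are nested by one
  new point, and the chords of each odd length \<open>d < 2t\<close> by two new points, one for the chords
  starting at an even point and one for those starting at an odd point: \<open>2t + 1\<close> new points.
\<close>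

section \<open>Counting bound\<close>

lemma strong_nesting_id_iff:
  "strong_nesting X I id Y phi \<longleftrightarrow> finite Y \<and> X \<subseteq> Y \<and> (\<forall>A\<in>I. phi A \<in> Y \<and> phi A \<notin> A) \<and>
     inj_on (\<lambda>(A, x). {x, phi A}) (SIGMA A:I. A)"
  by (simp add: strong_nesting_def id_def)

lemma finite_pair_blocks: "finite X \<Longrightarrow> finite (pair_blocks X)"
  unfolding pair_blocks_def by (rule finite_subset[of _ "Pow X"]) auto

lemma card_pair_blocks: "finite X \<Longrightarrow> card (pair_blocks X) = card X choose 2"
  unfolding pair_blocks_def by (rule n_subsets)

lemma pair_blocks_containing:
  assumes "x \<in> X" "y \<in> X" "x \<noteq> y"
  shows "{A \<in> pair_blocks X. x \<in> A \<and> y \<in> A} = {{x, y}}"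
proof -
  have "A = {x, y}" if A: "A \<in> pair_blocks X" "x \<in> A" "y \<in> A" for A
  proof -
    obtain a b where "A = {a, b}" using A(1) by (auto simp: pair_blocks_def card_2_iff)
    then show ?thesis using A(2,3) \<open>x \<noteq> y\<close> by auto
  qed
  moreover have "{x, y} \<in> pair_blocks X" using assms by (simp add: pair_blocks_def)
  ultimately show ?thesis by blast
qed

lemma is_bibd_pair_blocks:
  assumes "finite X" "card X = v"
  shows "is_bibd X (pair_blocks X) id v 2 1"
  unfolding is_bibd_def id_apply
proof (intro conjI ballI impI)
  show "finite (pair_blocks X)" using finite_pair_blocks[OF assms(1)] .
  show "card {A \<in> pair_blocks X. x \<in> A \<and> y \<in> A} = 1" if "x \<in> X" "y \<in> X" "x \<noteq> y" for x y
    using pair_blocks_containing[OF that] by simp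
qed (use assms in \<open>auto simp: pair_blocks_def\<close>)

lemma card_Sigma_pair_blocks:
  assumes "finite X" "S \<subseteq> pair_blocks X"
  shows "card (SIGMA A:S. A) = 2 * card S"
proof -
  have "finite S" using finite_subset[OF assms(2) finite_pair_blocks[OF assms(1)]] .
  have "finite A" "card A = 2" if "A \<in> S" for A
    using that assms finite_subset[of A X] by (auto simp: pair_blocks_def)
  then have "card (SIGMA A:S. A) = (\<Sum>A\<in>S. card A)"
    using \<open>finite S\<close> by (intro card_SigmaI) auto
  also have "\<dots> = (\<Sum>A\<in>S. 2)"
    using \<open>\<And>A. A \<in> S \<Longrightarrow> card A = 2\<close> by (rule sum.cong[OF refl])
  finally show ?thesis by simp
qed

lemma
  assumes fin: "finite X" and sn: "strong_nesting X (pair_blocks X) id Y phi"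
  shows card_nested_by_inner_points: "2 * card {A \<in> pair_blocks X. phi A \<in> X} \<le> card (pair_blocks X)"
    and card_nested_by_point: "card {A \<in> pair_blocks X. phi A = y} \<le> card X div 2"
proof -
  let ?P = "pair_blocks X"
  have phi_notin: "\<And>A. A \<in> ?P \<Longrightarrow> phi A \<notin> A"
    and inj: "inj_on (\<lambda>(A, x). {x, phi A}) (SIGMA A:?P. A)"
    using sn unfolding strong_nesting_id_iff by auto
  let ?inner = "{A \<in> ?P. phi A \<in> X}"
  have "(\<lambda>(A, x). {x, phi A}) ` (SIGMA A:?inner. A) \<subseteq> ?P"
  proof clarify
    fix A x assume A: "A \<in> ?P" "phi A \<in> X" "x \<in> A"
    then have "x \<in> X" "x \<noteq> phi A" using phi_notin[OF A(1)] by (auto simp: pair_blocks_def)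
    then show "{x, phi A} \<in> ?P" using A(2) by (simp add: pair_blocks_def)
  qed
  then have "card (SIGMA A:?inner. A) \<le> card ?P"
    by (intro card_inj_on_le[OF inj_on_subset[OF inj]] finite_pair_blocks[OF fin]) auto
  then show "2 * card ?inner \<le> card ?P"
    using card_Sigma_pair_blocks[OF fin, of ?inner] by simp
  let ?at_y = "{A \<in> ?P. phi A = y}"
  have "inj_on snd (SIGMA A:?at_y. A)"
  proof (rule inj_onI)
    fix p q assume "p \<in> (SIGMA A:?at_y. A)" "q \<in> (SIGMA A:?at_y. A)" "snd p = snd q"
    then show "p = q" using inj_onD[OF inj, of p q] by auto
  qed
  moreover have "snd ` (SIGMA A:?at_y. A) \<subseteq> X" by (auto simp: pair_blocks_def)
  ultimately have "card (SIGMA A:?at_y. A) \<le> card X"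
    using fin by (rule card_inj_on_le)
  then have "2 * card ?at_y \<le> card X"
    using card_Sigma_pair_blocks[OF fin, of ?at_y] by simp
  then show "card ?at_y \<le> card X div 2"
    by simp
qed

lemma strong_nesting_pair_blocks_card_bound:
  assumes fin: "finite X" and sn: "strong_nesting X (pair_blocks X) id Y phi"
  shows "card X choose 2 \<le> 2 * ((card Y - card X) * (card X div 2))"
proof -
  let ?P = "pair_blocks X"
  let ?inner = "{A \<in> ?P. phi A \<in> X}" and ?outer = "{A \<in> ?P. phi A \<in> Y - X}"
  have finP: "finite ?P" using finite_pair_blocks[OF fin] .
  have finY: "finite Y" and XY: "X \<subseteq> Y" and phiY: "\<And>A. A \<in> ?P \<Longrightarrow> phi A \<in> Y"
    using sn unfolding strong_nesting_id_iff by auto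
  have split: "card ?P = card ?inner + card ?outer"
  proof -
    have "?P = ?inner \<union> ?outer" "?inner \<inter> ?outer = {}" using phiY by auto
    then show ?thesis using finP by (metis card_Un_disjoint finite_Un)
  qed
  have "card ?outer \<le> card (\<Union>y\<in>Y - X. {A \<in> ?P. phi A = y})"
    by (intro card_mono finite_subset[OF _ finP]) auto
  also have "\<dots> \<le> (\<Sum>y\<in>Y - X. card {A \<in> ?P. phi A = y})"
    using finY by (intro card_UN_le) simp
  also have "\<dots> \<le> card (Y - X) * (card X div 2)"
    using card_nested_by_point[OF fin sn] by (intro sum_bounded_above[where K = "card X div 2", simplified])
  finally have "card ?outer \<le> (card Y - card X) * (card X div 2)"
    using card_Diff_subset[OF finite_subset[OF XY finY] XY] by simp
  moreover have "card ?inner \<le> card ?outer"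
    using card_nested_by_inner_points[OF fin sn] split by linarith
  ultimately show ?thesis
    using split card_pair_blocks[OF fin] by linarith
qed

lemma strong_nesting_pair_blocks_card_ge:
  assumes fin: "finite X" and card: "card X = 4 * t + 1" and t: "t \<ge> 1"
    and sn: "strong_nesting X (pair_blocks X) id Y phi"
  shows "6 * t + 2 \<le> card Y"
proof -
  have "(4 * t + 1) * (2 * t) = card X choose 2" using card by (simp add: choose_two)
  also have "\<dots> \<le> 2 * ((card Y - card X) * (card X div 2))"
    by (rule strong_nesting_pair_blocks_card_bound[OF fin sn])
  also have "\<dots> = (2 * (card Y - (4 * t + 1))) * (2 * t)" using card by simp
  finally have "(4 * t + 1) * (2 * t) \<le> (2 * (card Y - (4 * t + 1))) * (2 * t)" .
  then have "4 * t + 1 \<le> 2 * (card Y - (4 * t + 1))" using t by (subst (asm) mult_le_cancel2) simp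
  then show ?thesis by linarith
qed

section \<open>Transporting strong nestings\<close>

lemma strong_nesting_if_nesting_relation:
  assumes "finite Y" "X \<subseteq> Y"
    and exists: "\<And>A. A \<in> I \<Longrightarrow> \<exists>c\<in>Y. R c A"
    and notin: "\<And>c A. R c A \<Longrightarrow> c \<notin> A"
    and unique: "\<And>c A A' x. R c A \<Longrightarrow> R c A' \<Longrightarrow> x \<in> A \<Longrightarrow> x \<in> A' \<Longrightarrow> A = A'"
    and not_mutual: "\<And>c c' A A'. R c A \<Longrightarrow> R c' A' \<Longrightarrow> c \<in> A' \<Longrightarrow> c' \<notin> A"
  shows "\<exists>phi. strong_nesting X I id Y phi"
proof -
  obtain phi where phi: "\<And>A. A \<in> I \<Longrightarrow> phi A \<in> Y \<and> R (phi A) A"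
    using exists by metis
  have "inj_on (\<lambda>(A, x). {x, phi A}) (SIGMA A:I. A)"
  proof (rule inj_onI, clarify)
    fix A x A' x'
    assume A: "A \<in> I" "x \<in> A" and A': "A' \<in> I" "x' \<in> A'" and eq: "{x, phi A} = {x', phi A'}"
    have R: "R (phi A) A" "R (phi A') A'" using phi A(1) A'(1) by auto
    from eq consider "x = x'" "phi A = phi A'" | "x = phi A'" "phi A = x'"
      by (auto simp: doubleton_eq_iff)
    then show "A = A' \<and> x = x'"
    proof cases
      case 1
      then show ?thesis using unique[OF R(1)] R(2) A A' by metis
    next
      case 2
      then show ?thesis using not_mutual[OF R] A A' by simp
    qed
  qed
  then have "strong_nesting X I id Y phi"
    using assms(1,2) phi notin by (auto simp: strong_nesting_def id_def)
  then show ?thesis by blast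
qed

lemma strong_nesting_image:
  assumes sn: "strong_nesting X I B Y phi" and blocks: "\<And>i. i \<in> I \<Longrightarrow> B i \<subseteq> X"
    and inj: "inj_on f Y"
  shows "strong_nesting (f ` X) I (\<lambda>i. f ` B i) (f ` Y) (f \<circ> phi)"
proof -
  have XY: "X \<subseteq> Y" and finY: "finite Y" and phi: "\<And>i. i \<in> I \<Longrightarrow> phi i \<in> Y \<and> phi i \<notin> B i"
    and inj_pairs: "inj_on (\<lambda>(i, x). {x, phi i}) (SIGMA i:I. B i)"
    using sn unfolding strong_nesting_def by auto
  have BY: "B i \<subseteq> Y" if "i \<in> I" for i using blocks[OF that] XY by blast
  have "(f \<circ> phi) i \<in> f ` Y \<and> (f \<circ> phi) i \<notin> f ` B i" if "i \<in> I" for i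
    using phi[OF that] inj_on_image_mem_iff[OF inj _ BY[OF that]] by simp
  moreover have "inj_on (\<lambda>(i, y). {y, (f \<circ> phi) i}) (SIGMA i:I. f ` B i)"
  proof (rule inj_onI, clarify)
    fix i x j x'
    assume ix: "i \<in> I" "x \<in> B i" and jx': "j \<in> I" "x' \<in> B j"
      and eq: "{f x, (f \<circ> phi) i} = {f x', (f \<circ> phi) j}"
    have sub: "{x, phi i} \<subseteq> Y" "{x', phi j} \<subseteq> Y"
      using phi[OF ix(1)] phi[OF jx'(1)] BY[OF ix(1)] BY[OF jx'(1)] ix(2) jx'(2) by auto
    have "{x, phi i} = {x', phi j}"
      using eq inj_on_image_eq_iff[OF inj sub] by simp
    then have "(i, x) = (j, x')" using inj_onD[OF inj_pairs, of "(i, x)" "(j, x')"] ix jx' by simp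
    then show "i = j \<and> f x = f x'" by simp
  qed
  moreover have "finite (f ` Y)" "f ` X \<subseteq> f ` Y" using finY XY by auto
  ultimately show ?thesis unfolding strong_nesting_def by blast
qed

lemma strong_nesting_reindex:
  assumes sn: "strong_nesting X I B Y phi" and h: "inj_on h J" "h ` J \<subseteq> I"
    and B': "\<And>j. j \<in> J \<Longrightarrow> B' j = B (h j)"
  shows "strong_nesting X J B' Y (phi \<circ> h)"
proof -
  have inj_pairs: "inj_on (\<lambda>(i, x). {x, phi i}) (SIGMA i:I. B i)"
    using sn unfolding strong_nesting_def by simp
  have "inj_on (\<lambda>(j, x). {x, (phi \<circ> h) j}) (SIGMA j:J. B' j)"
  proof (rule inj_onI, clarify)
    fix j x j' x'
    assume jx: "j \<in> J" "x \<in> B' j" and jx': "j' \<in> J" "x' \<in> B' j'"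
      and eq: "{x, (phi \<circ> h) j} = {x', (phi \<circ> h) j'}"
    have "h j \<in> I" "h j' \<in> I" using h(2) jx(1) jx'(1) by auto
    then have "(h j, x) = (h j', x')"
      using inj_onD[OF inj_pairs, of "(h j, x)" "(h j', x')"] eq jx jx' B' by auto
    then show "j = j' \<and> x = x'" using inj_onD[OF h(1)] jx jx' by auto
  qed
  then show ?thesis
    using sn h(2) B' unfolding strong_nesting_def by auto
qed

lemma bij_betw_image_pair_blocks:
  assumes inj: "inj_on f X"
  shows "bij_betw (image f) (pair_blocks X) (pair_blocks (f ` X))"
proof (rule bij_betw_imageI)
  have card_image_block: "card (f ` C) = card C" if "C \<subseteq> X" for C
    using card_image[OF inj_on_subset[OF inj that]] .
  have "\<Union>(pair_blocks X) \<subseteq> X" by (auto simp: pair_blocks_def)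
  then show "inj_on (image f) (pair_blocks X)"
    by (rule inj_on_image[OF inj_on_subset[OF inj]])
  show "image f ` pair_blocks X = pair_blocks (f ` X)"
  proof (intro equalityI subsetI)
    fix A assume "A \<in> image f ` pair_blocks X"
    then obtain C where "C \<subseteq> X" "card C = 2" "A = f ` C" by (auto simp: pair_blocks_def)
    then show "A \<in> pair_blocks (f ` X)" using card_image_block by (auto simp: pair_blocks_def)
  next
    fix A assume A: "A \<in> pair_blocks (f ` X)"
    let ?C = "X \<inter> f -` A"
    have fC: "f ` ?C = A" using A by (auto simp: pair_blocks_def)
    have "card ?C = card A" using card_image_block[of ?C] fC by simp
    then have "?C \<in> pair_blocks X" using A by (simp add: pair_blocks_def)
    with fC show "A \<in> image f ` pair_blocks X" by blast
  qed
qed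

lemma strong_nesting_pair_blocks_image:
  assumes sn: "strong_nesting X (pair_blocks X) id Y phi" and inj: "inj_on f Y"
  shows "\<exists>psi. strong_nesting (f ` X) (pair_blocks (f ` X)) id (f ` Y) psi"
proof -
  let ?P = "pair_blocks X" and ?h = "inv_into (pair_blocks X) (image f)"
  have XY: "X \<subseteq> Y" using sn by (simp add: strong_nesting_def)
  have bij: "bij_betw ?h (pair_blocks (f ` X)) ?P"
    using bij_betw_inv_into[OF bij_betw_image_pair_blocks[OF inj_on_subset[OF inj XY]]] .
  have "strong_nesting (f ` X) ?P (\<lambda>A. f ` id A) (f ` Y) (f \<circ> phi)"
    by (rule strong_nesting_image[OF sn _ inj]) (simp add: pair_blocks_def)
  then have "strong_nesting (f ` X) (pair_blocks (f ` X)) id (f ` Y) (f \<circ> phi \<circ> ?h)"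
  proof (rule strong_nesting_reindex)
    show "inj_on ?h (pair_blocks (f ` X))" "?h ` pair_blocks (f ` X) \<subseteq> ?P"
      using bij by (auto simp: bij_betw_def)
    show "id A = f ` id (?h A)" if "A \<in> pair_blocks (f ` X)" for A
      using f_inv_into_f[of A "image f" ?P] that
        bij_betw_imp_surj_on[OF bij_betw_image_pair_blocks[OF inj_on_subset[OF inj XY]]] by simp
  qed
  then show ?thesis by blast
qed

lemma ex_inj_on_extending_onto:
  assumes inf: "infinite (UNIV :: 'a set)" and fin: "finite X" "finite Y0" and sub: "X0 \<subseteq> Y0"
    and card: "card X0 = card X"
  shows "\<exists>f :: 'b \<Rightarrow> 'a. inj_on f Y0 \<and> f ` X0 = X"
proof -
  obtain g where g: "bij_betw g X0 X"
    using finite_same_card_bij[OF finite_subset[OF sub fin(2)] fin(1) card] by blast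
  obtain C where C: "finite C" "card C = card (Y0 - X0)" "C \<subseteq> UNIV - X"
    using infinite_arbitrarily_large[OF Diff_infinite_finite[OF fin(1) inf]] by blast
  obtain h where h: "h ` (Y0 - X0) \<subseteq> C" "inj_on h (Y0 - X0)"
    using card_le_inj[of "Y0 - X0" C] fin(2) C(1,2) by auto
  have "g ` X0 \<inter> h ` (Y0 - X0) = {}" using g h(1) C(3) by (auto simp: bij_betw_def)
  then have "inj_on (\<lambda>y. if y \<in> X0 then g y else h y) (X0 \<union> (Y0 - X0))"
    using g h(2) by (intro inj_on_disjoint_Un) (auto simp: bij_betw_def)
  moreover have "X0 \<union> (Y0 - X0) = Y0" using sub by blast
  moreover have "(\<lambda>y. if y \<in> X0 then g y else h y) ` X0 = X" using g by (simp add: bij_betw_def)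
  ultimately show ?thesis by metis
qed

section \<open>The cyclic construction\<close>

lemma eq_if_mod_eq_abs_less:
  fixes a b n :: int
  assumes "a mod n = b mod n" "\<bar>a - b\<bar> < n"
  shows "a = b"
proof (rule ccontr)
  assume "a \<noteq> b"
  moreover have "n dvd a - b" using assms(1) by (simp add: mod_eq_dvd_iff)
  ultimately have "\<bar>n\<bar> \<le> \<bar>a - b\<bar>" by (intro dvd_imp_le_int) simp_all
  with assms(2) show False by simp
qed

lemma mod_diff_neq_self:
  fixes c m n :: int
  assumes "0 \<le> c" "c < n" "0 < m" "m < n"
  shows "(c - m) mod n \<noteq> c"
proof
  assume eq: "(c - m) mod n = c"
  have "c mod n = c" using assms(1,2) by (rule mod_pos_pos_trivial)
  then have "c mod n = (c - m) mod n" using eq by (rule trans[OF _ sym])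
  moreover have "\<bar>c - (c - m)\<bar> < n" using assms(3,4) by simp
  ultimately have "c = c - m" by (rule eq_if_mod_eq_abs_less)
  with assms(3) show False by simp
qed

lemma odd_chord_eq_if_common_point:
  fixes a a' d n x :: int
  assumes "even n" "odd d" "a mod 2 = a' mod 2" "0 \<le> a" "a < n" "0 \<le> a'" "a' < n"
    and x: "x \<in> {a, (a + d) mod n}" "x \<in> {a', (a' + d) mod n}"
  shows "a = a'"
proof -
  have parity: "even ((b + d) mod n) \<longleftrightarrow> odd b" for b
  proof -
    have "(b + d) mod n mod 2 = (b + d) mod 2" using assms(1) by (simp add: mod_mod_cancel)
    then have "even ((b + d) mod n) \<longleftrightarrow> even (b + d)" by (simp only: even_iff_mod_2_eq_zero)
    then show ?thesis using assms(2) by simp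
  qed
  have "even a \<longleftrightarrow> even a'" using assms(3) by (simp add: even_iff_mod_2_eq_zero)
  then consider "x = a" "x = a'" | "x = (a + d) mod n" "x = (a' + d) mod n"
    using x parity[of a] parity[of a'] by fastforce
  then show ?thesis
  proof cases
    case 2
    then have "(a + d) mod n = (a' + d) mod n" by simp
    moreover have "\<bar>(a + d) - (a' + d)\<bar> < n" using assms(4-7) by simp
    ultimately show ?thesis by (auto dest: eq_if_mod_eq_abs_less)
  qed simp
qed

text \<open>
  The points \<open>0, \<dots>, 4T - 1\<close> stand for \<open>\<int>\<^sub>4\<^sub>T\<close> and \<open>4T\<close> for \<open>\<infinity>\<close>. The new points are \<open>4T + 1\<close>,
  nesting the diameters, and \<open>4T + 1 + d + p\<close> with \<open>d\<close> odd and \<open>p \<in> {0, 1}\<close>, nesting the chords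
  \<open>{a, a + d}\<close> with \<open>a mod 2 = p\<close>. Since \<open>inner_block T c k = inner_block T c (2T - k)\<close>,
  every block of the inner point \<open>c\<close> is listed twice as \<open>k\<close> runs over \<open>0 < k < 2T\<close>, except
  \<open>{c - T, \<infinity>}\<close>.
\<close>

definition inner_block :: "int \<Rightarrow> int \<Rightarrow> int \<Rightarrow> int set" where
  "inner_block T c k =
     {(c - k) mod (4 * T), if k = T then 4 * T else (c - (2 * T - k)) mod (4 * T)}"

definition nests :: "int \<Rightarrow> int \<Rightarrow> int set \<Rightarrow> bool" where
  "nests T c A \<longleftrightarrow>
     (0 \<le> c \<and> c < 4 * T \<and> (\<exists>k. 0 < k \<and> k < 2 * T \<and> A = inner_block T c k))
   \<or> (c = 4 * T + 1 \<and> (\<exists>a. 0 \<le> a \<and> a < 2 * T \<and> A = {a, a + 2 * T}))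
   \<or> (\<exists>d a. 0 < d \<and> d < 2 * T \<and> odd d \<and> 0 \<le> a \<and> a < 4 * T \<and>
        c = 4 * T + 1 + d + a mod 2 \<and> A = {a, (a + d) mod (4 * T)})"

lemma inner_block_reflect: "inner_block T c (2 * T - k) = inner_block T c k"
  by (auto simp: inner_block_def)

lemma mem_inner_block:
  assumes x: "x \<in> inner_block T c k" "x \<noteq> 4 * T" and k: "0 < k" "k < 2 * T"
  shows "\<exists>m. 0 < m \<and> m < 2 * T \<and> x = (c - m) mod (4 * T) \<and> inner_block T c m = inner_block T c k"
proof -
  consider "x = (c - k) mod (4 * T)" | "k \<noteq> T" "x = (c - (2 * T - k)) mod (4 * T)"
    using x by (auto simp: inner_block_def split: if_splits)
  then show ?thesis
  proof cases
    case 1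
    then show ?thesis using k by blast
  next
    case 2
    then show ?thesis using k inner_block_reflect[of T c k] by (intro exI[of _ "2 * T - k"]) auto
  qed
qed

lemma four_T_mem_inner_block_iff:
  assumes "T > 0"
  shows "4 * T \<in> inner_block T c k \<longleftrightarrow> k = T"
proof -
  have "(c - k) mod (4 * T) < 4 * T" "(c - (2 * T - k)) mod (4 * T) < 4 * T"
    using assms by simp_all
  then show ?thesis by (auto simp: inner_block_def)
qed

lemma inner_block_eq_if_common_point:
  assumes T: "T > 0" and k: "0 < k" "k < 2 * T" and k': "0 < k'" "k' < 2 * T"
    and x: "x \<in> inner_block T c k" "x \<in> inner_block T c k'"
  shows "inner_block T c k = inner_block T c k'"
proof (cases "x = 4 * T")
  case True
  then show ?thesis using x four_T_mem_inner_block_iff[OF T] by simp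
next
  case False
  then obtain m m' where m: "0 < m" "m < 2 * T" "x = (c - m) mod (4 * T)" "inner_block T c m = inner_block T c k"
    and m': "0 < m'" "m' < 2 * T" "x = (c - m') mod (4 * T)" "inner_block T c m' = inner_block T c k'"
    using mem_inner_block[OF x(1) False k] mem_inner_block[OF x(2) False k'] by blast
  have "(c - m) mod (4 * T) = (c - m') mod (4 * T)" using m(3) m'(3) by simp
  moreover have "\<bar>(c - m) - (c - m')\<bar> < 4 * T" using m m' by simp
  ultimately have "c - m = c - m'" by (rule eq_if_mod_eq_abs_less)
  then show ?thesis using m(4) m'(4) by simp
qed

lemma nests_range:
  assumes "T > 0" "nests T c A"
  shows "0 \<le> c \<and> c \<le> 6 * T + 1 \<and> A \<subseteq> {0..4 * T}"
  using assms unfolding nests_def inner_block_def by (auto simp: less_imp_le)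

lemma nests_center_ne:
  assumes "nests T c A"
  shows "c \<noteq> 4 * T"
proof -
  have "0 \<le> a mod 2" for a :: int by simp
  then show ?thesis using assms unfolding nests_def by force
qed

lemma nests_offset:
  assumes T: "T > 0" and cA: "nests T c A" and x: "x \<in> A" "x < 4 * T" and c: "c < 4 * T"
  shows "\<exists>m. 0 < m \<and> m < 2 * T \<and> x = (c - m) mod (4 * T)"
proof -
  obtain k where "0 < k" "k < 2 * T" "A = inner_block T c k"
    using cA c unfolding nests_def by auto
  then show ?thesis using mem_inner_block[of x T c k] x by auto
qed

lemma nests_center_notin:
  assumes T: "T > 0" and cA: "nests T c A"
  shows "c \<notin> A"
proof
  assume "c \<in> A"
  then have c: "0 \<le> c" "c < 4 * T"
    using nests_range[OF T cA] nests_center_ne[OF cA] by fastforce+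
  then obtain m where "0 < m" "m < 2 * T" "c = (c - m) mod (4 * T)"
    using nests_offset[OF T cA \<open>c \<in> A\<close>] by blast
  with c mod_diff_neq_self[of c "4 * T" m] show False by simp
qed

lemma nests_not_mutual:
  assumes T: "T > 0" and cA: "nests T c A" and cA': "nests T c' A'" and "c \<in> A'"
  shows "c' \<notin> A"
proof
  assume "c' \<in> A"
  have lt: "0 \<le> c" "c < 4 * T" "c' < 4 * T"
    using nests_range[OF T cA] nests_range[OF T cA'] nests_center_ne[OF cA] nests_center_ne[OF cA']
      \<open>c \<in> A'\<close> \<open>c' \<in> A\<close> by fastforce+
  obtain m where m: "0 < m" "m < 2 * T" "c' = (c - m) mod (4 * T)"
    using nests_offset[OF T cA \<open>c' \<in> A\<close> lt(3) lt(2)] by blast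
  obtain m' where m': "0 < m'" "m' < 2 * T" "c = (c' - m') mod (4 * T)"
    using nests_offset[OF T cA' \<open>c \<in> A'\<close> lt(2) lt(3)] by blast
  have "c = ((c - m) mod (4 * T) - m') mod (4 * T)"
    using m'(3) unfolding m(3) .
  also have "\<dots> = (c - (m + m')) mod (4 * T)"
    by (simp add: mod_diff_left_eq diff_diff_eq)
  finally show False
    using mod_diff_neq_self[of c "4 * T" "m + m'"] lt(1,2) m(1,2) m'(1,2) by simp
qed

lemma nests_unique:
  assumes T: "T > 0" and cA: "nests T c A" and cA': "nests T c A'" and x: "x \<in> A" "x \<in> A'"
  shows "A = A'"
proof -
  consider (inner) "0 \<le> c" "c < 4 * T" | (diameter) "c = 4 * T + 1" | (odd) "c > 4 * T + 1"
    using nests_range[OF T cA] nests_center_ne[OF cA] by fastforce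
  then show ?thesis
  proof cases
    case inner
    then obtain k k' where "0 < k" "k < 2 * T" "A = inner_block T c k"
      and "0 < k'" "k' < 2 * T" "A' = inner_block T c k'"
      using cA cA' unfolding nests_def by auto
    then show ?thesis using inner_block_eq_if_common_point[OF T] x by metis
  next
    case diameter
    then obtain a a' where "0 \<le> a" "a < 2 * T" "A = {a, a + 2 * T}"
      and "0 \<le> a'" "a' < 2 * T" "A' = {a', a' + 2 * T}"
      using cA cA' unfolding nests_def by auto
    then show ?thesis using x by auto
  next
    case odd
    then obtain d a d' a' where
      A: "0 < d" "d < 2 * T" "odd d" "0 \<le> a" "a < 4 * T" "c = 4 * T + 1 + d + a mod 2"
        "A = {a, (a + d) mod (4 * T)}" and
      A': "0 < d'" "d' < 2 * T" "odd d'" "0 \<le> a'" "a' < 4 * T" "c = 4 * T + 1 + d' + a' mod 2"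
        "A' = {a', (a' + d') mod (4 * T)}"
      using cA cA' unfolding nests_def by auto
    have "d = d' \<and> a mod 2 = a' mod 2"
    proof (rule ccontr)
      assume "\<not> ?thesis"
      moreover have "a mod 2 \<in> {0, 1}" "a' mod 2 \<in> {0, 1}" by auto
      ultimately have "d - d' = 1 \<or> d - d' = -1" using A(6) A'(6) by auto
      moreover have "even (d - d')" using A(3) A'(3) by simp
      ultimately show False by (metis even_minus odd_one)
    qed
    then show ?thesis
      using odd_chord_eq_if_common_point[of "4 * T" d a a' x] A A' x by auto
  qed
qed

lemma nests_short_chord:
  assumes T: "T > 0" and x: "0 \<le> x" "x < 4 * T" and e: "0 < e" "e < 2 * T"
  shows "\<exists>c. nests T c {x, (x + e) mod (4 * T)}"
proof (cases "even e")
  case True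
  define k where "k = T + e div 2"
  define c where "c = (x + k) mod (4 * T)"
  have k: "0 < k" "k < 2 * T" "k \<noteq> T" using T e True by (auto simp: k_def)
  have "(c - k) mod (4 * T) = x"
    using x by (simp add: c_def mod_diff_left_eq)
  moreover have "(c - (2 * T - k)) mod (4 * T) = (x + e) mod (4 * T)"
  proof -
    have "c - (2 * T - k) = (x + k) mod (4 * T) + (k - 2 * T)" by (simp add: c_def)
    then have "(c - (2 * T - k)) mod (4 * T) = (x + k + (k - 2 * T)) mod (4 * T)"
      by (simp only: mod_add_left_eq)
    also have "x + k + (k - 2 * T) = x + e" using True by (simp add: k_def)
    finally show ?thesis .
  qed
  ultimately have "inner_block T c k = {x, (x + e) mod (4 * T)}"
    using k(3) by (simp add: inner_block_def)
  moreover have "0 \<le> c" "c < 4 * T" using T by (simp_all add: c_def)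
  ultimately have "nests T c {x, (x + e) mod (4 * T)}"
    using k(1,2) unfolding nests_def by metis
  then show ?thesis ..
next
  case False
  then have "nests T (4 * T + 1 + e + x mod 2) {x, (x + e) mod (4 * T)}"
    using x e unfolding nests_def by blast
  then show ?thesis ..
qed

lemma nests_cover:
  assumes T: "T > 0" and A: "A \<subseteq> {0..4 * T}" "card A = 2"
  shows "\<exists>c. nests T c A"
proof -
  obtain x y where xy: "A = {x, y}" "x < y"
  proof -
    obtain x y where "A = {x, y}" "x \<noteq> y" using A(2) by (auto simp: card_2_iff)
    then show thesis using that[of x y] that[of y x] by (cases "x < y") (auto simp: insert_commute)
  qed
  then have x: "0 \<le> x" "x < 4 * T" and y: "y \<le> 4 * T" using A(1) by auto
  consider "y = 4 * T" | "y < 4 * T" "y - x < 2 * T" | "y < 4 * T" "y - x = 2 * T"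
    | "y < 4 * T" "y - x > 2 * T"
    using y by linarith
  then show ?thesis
  proof cases
    case 1
    define c where "c = (x + T) mod (4 * T)"
    have "(c - T) mod (4 * T) = x" using x by (simp add: c_def mod_diff_left_eq)
    then have "A = inner_block T c T" using 1 xy(1) by (simp add: inner_block_def insert_commute)
    moreover have "0 \<le> c" "c < 4 * T" "0 < T" "T < 2 * T" using T by (simp_all add: c_def)
    ultimately have "nests T c A" unfolding nests_def by blast
    then show ?thesis ..
  next
    case 2
    have "(x + (y - x)) mod (4 * T) = y" using x xy 2 by simp
    then show ?thesis using nests_short_chord[OF T x, of "y - x"] xy 2 by simp
  next
    case 3
    then have "0 \<le> x" "x < 2 * T" "A = {x, x + 2 * T}" using x xy by auto
    then have "nests T (4 * T + 1) A" unfolding nests_def by blast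
    then show ?thesis ..
  next
    case 4
    have "(y + (4 * T - (y - x))) mod (4 * T) = x" using x by simp
    then show ?thesis
      using nests_short_chord[OF T _ 4(1), of "4 * T - (y - x)"] xy x 4 by (simp add: insert_commute)
  qed
qed

lemma ex_strong_nesting_int:
  fixes T :: int
  assumes T: "T > 0"
  shows "\<exists>phi. strong_nesting {0..4 * T} (pair_blocks {0..4 * T}) id {0..6 * T + 1} phi"
proof (rule strong_nesting_if_nesting_relation[where R = "nests T"])
  show "finite {0..6 * T + 1}" "{0..4 * T} \<subseteq> {0..6 * T + 1}" using T by auto
  show "\<exists>c\<in>{0..6 * T + 1}. nests T c A" if "A \<in> pair_blocks {0..4 * T}" for A
  proof -
    have "A \<subseteq> {0..4 * T}" "card A = 2" using that by (simp_all add: pair_blocks_def)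
    then obtain c where "nests T c A" using nests_cover[OF T] by blast
    then show ?thesis using nests_range[OF T] by auto
  qed
  show "c \<notin> A" if "nests T c A" for c A
    using nests_center_notin[OF T that] .
  show "A = A'" if "nests T c A" "nests T c A'" "x \<in> A" "x \<in> A'" for c A A' x
    using nests_unique[OF T that] .
  show "c' \<notin> A" if "nests T c A" "nests T c' A'" "c \<in> A'" for c c' A A'
    using nests_not_mutual[OF T that] .
qed

lemma ex_strong_nesting_pair_blocks:
  fixes X :: "'a set"
  assumes inf: "infinite (UNIV :: 'a set)" and fin: "finite X" and card: "card X = 4 * t + 1"
    and t: "t \<ge> 1"
  shows "\<exists>Y phi. strong_nesting X (pair_blocks X) id Y phi \<and> card Y = 6 * t + 2"
proof -
  define T where "T = int t"
  have T: "T > 0" using t by (simp add: T_def)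
  obtain phi where phi: "strong_nesting {0..4 * T} (pair_blocks {0..4 * T}) id {0..6 * T + 1} phi"
    using ex_strong_nesting_int[OF T] by blast
  have "card {0..4 * T} = card X" using card by (simp add: T_def)
  then obtain f :: "int \<Rightarrow> 'a" where f: "inj_on f {0..6 * T + 1}" "f ` {0..4 * T} = X"
    using ex_inj_on_extending_onto[OF inf fin, of "{0..6 * T + 1}" "{0..4 * T}"] T by auto
  obtain psi where "strong_nesting X (pair_blocks X) id (f ` {0..6 * T + 1}) psi"
    using strong_nesting_pair_blocks_image[OF phi f(1)] unfolding f(2) by blast
  moreover have "card (f ` {0..6 * T + 1}) = 6 * t + 2"
    using card_image[OF f(1)] by (simp add: T_def)
  ultimately show ?thesis by blast
qed

theorem theorem4p2:
  fixes X :: "'a set" and t :: nat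
  assumes "infinite (UNIV :: 'a set)"
    and "t \<ge> 1"
    and "finite X" and "card X = 4 * t + 1"
  shows "is_bibd X (pair_blocks X) id (4 * t + 1) 2 1
    \<and> (\<exists>Y phi. strong_nesting X (pair_blocks X) id Y phi \<and> card Y = 6 * t + 2)
    \<and> (\<forall>Y phi. strong_nesting X (pair_blocks X) id Y phi \<longrightarrow> 6 * t + 2 \<le> card Y)"
  using is_bibd_pair_blocks[OF assms(3,4)] ex_strong_nesting_pair_blocks[OF assms(1,3,4,2)]
    strong_nesting_pair_blocks_card_ge[OF assms(3,4,2)] by blast

end
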